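(* For $\mu_y\in\mathbb{R}$ and $\sigma_y\in\mathbb{R}$, let $W(\mu_y,\sigma_y)$ denote the 1-Wasserstein distance $W_1(X_1,X_2)$ between independent univariate Gaussians $X_1\sim N(\mu_1,\sigma_1^2)$ and $X_2\sim N(\mu_2,\sigma_2^2)$ with $\mu_1-\mu_2=\mu_y$ and $\sigma_1-\sigma_2=\sigma_y$ (this depends only on $(\mu_y,\sigma_y)$). Then: (i) for fixed $\mu_y$, $W(\mu_y,\sigma_y)\to\lvert\mu_y\rvert=\lvert\mu_1-\mu_2\rvert$ as $\sigma_y\to 0$; (ii) for fixed $\sigma_y$, $W(\mu_y,\sigma_y)-\lvert\mu_y\rvert\to 0$ as $\mu_y\to+\infty$ or $\mu_y\to-\infty$; (iii) for fixed $\mu_y$, $W(\mu_y,\sigma_y)-\sqrt{\tfrac{2}{\pi}}\lvert\sigma_y\rvert\to 0$ as $\lvert\sigma_y\rvert\to\infty$; (iv) for fixed $\sigma_y\neq 0$, $W(\mu_y,\sigma_y)\to\sqrt{\tfrac{2}{\pi}}\lvert\sigma_y\rvert=\sqrt{\tfrac{2}{\pi}}\lvert\sigma_1-\sigma_2\rvert$ as $\mu_y\to 0$.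
   Context: For univariate random variables $X,Y$ with laws $\mu,\nu$, the 1-Wasserstein distance is $W_1(X,Y)=\inf_{\pi\in\Pi(\mu,\nu)}\int \lvert x-y\rvert\,d\pi(x,y)$, where $\Pi(\mu,\nu)$ is the set of couplings of $\mu$ and $\nu$. The paper phrases this as: $W_1$ converges asymptotically to the lower bound $\lvert\mu_1-\mu_2\rvert$ when $\sigma_y\to0$ or $\mu_y\to\pm\infty$, and to $\sqrt{2/\pi}\,\lvert\sigma_1-\sigma_2\rvert$ when $\sigma_y\to\infty$ or $\mu_y\to 0$. *)

theory Defs
  imports "HOL-Probability.Probability"
begin

definition gaussian :: "real \<Rightarrow> real \<Rightarrow> real measure" where
  "gaussian m s = density lborel (normal_density m s)"

definition couplings :: "real measure \<Rightarrow> real measure \<Rightarrow> (real \<times> real) measure set" where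
  "couplings \<mu> \<nu> = {\<pi>. sets \<pi> = sets (borel \<Otimes>\<^sub>M borel) \<and> prob_space \<pi> \<and>
      distr \<pi> borel fst = \<mu> \<and> distr \<pi> borel snd = \<nu>}"

definition wasserstein1 :: "real measure \<Rightarrow> real measure \<Rightarrow> real" where
  "wasserstein1 \<mu> \<nu> =
     enn2real (INF \<pi> \<in> couplings \<mu> \<nu>. \<integral>\<^sup>+ z. ennreal \<bar>fst z - snd z\<bar> \<partial>\<pi>)"

text \<open>W(mu_y, sigma_y): W1 between N(mu_1,sigma_1^2) and N(mu_2,sigma_2^2) for one
  canonical choice with mu_1 - mu_2 = mu_y, sigma_1 - sigma_2 = sigma_y, sigma_i > 0
  (mu_2 = 0, sigma_2 = 1 + |sigma_y|). Independence of this choice is part of the theorem.\<close>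
definition gaussW :: "real \<Rightarrow> real \<Rightarrow> real" where
  "gaussW my sy = wasserstein1 (gaussian my (1 + \<bar>sy\<bar> + sy)) (gaussian 0 (1 + \<bar>sy\<bar>))"

end

theory Submission
  imports Defs
begin

text \<open>Write \<open>Z\<close> for a standard normal variable, \<open>m = \<mu>\<^sub>1 - \<mu>\<^sub>2\<close> and \<open>s = \<sigma>\<^sub>1 - \<sigma>\<^sub>2\<close>.
  The comonotone coupling \<open>(\<mu>\<^sub>1 + \<sigma>\<^sub>1 Z, \<mu>\<^sub>2 + \<sigma>\<^sub>2 Z)\<close> costs \<open>E|m + s Z|\<close>. Conversely there is
  a 1-Lipschitz \<open>\<phi>\<close> with \<open>\<phi>(\<mu>\<^sub>1 + \<sigma>\<^sub>1 z) - \<phi>(\<mu>\<^sub>2 + \<sigma>\<^sub>2 z) = |m + s z|\<close> for all \<open>z\<close>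
  (\<open>\<phi>(x) = sgn(s) |x - x\<^sub>0|\<close> with \<open>x\<^sub>0\<close> the point where the two affine maps meet, or a linear
  \<open>\<phi>\<close> if \<open>s = 0\<close>), and for every coupling \<open>E \<phi>(X) - E \<phi>(Y) \<le> E|X - Y|\<close>. Hence
  \<open>W(m, s) = E|m + s Z|\<close>, the mean of a folded normal distribution.

  This function is subadditive, hence Lipschitz in \<open>(m, s)\<close>, which gives the limits at
  \<open>s \<rightarrow> 0\<close> and \<open>m \<rightarrow> 0\<close> (the latter without needing \<open>s \<noteq> 0\<close>). For \<open>|m| \<rightarrow> \<infinity>\<close>,
  linearising \<open>|m + x|\<close> at \<open>m\<close> and using \<open>E Z = 0\<close>, \<open>E Z\<^sup>2 = 1\<close> gives an error
  \<open>\<le> s\<^sup>2 / (2|m|)\<close>. For \<open>|s| \<rightarrow> \<infinity>\<close>, symmetry of \<open>Z\<close> gives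
  \<open>E|m + s Z| - E|s Z| = E max(0, |m| - |s Z|)\<close>, which is at most \<open>|m|\<close> times the
  probability \<open>O(|m| / |s|)\<close> of the event \<open>|s Z| \<le> |m|\<close>.\<close>

section \<open>Couplings and the Wasserstein distance\<close>

lemma couplings_distr_pair:
  assumes "prob_space P" and [measurable]: "f \<in> borel_measurable P" "g \<in> borel_measurable P"
  shows "distr P (borel \<Otimes>\<^sub>M borel) (\<lambda>z. (f z, g z)) \<in> couplings (distr P borel f) (distr P borel g)"
  unfolding couplings_def
proof (intro CollectI conjI)
  show "prob_space (distr P (borel \<Otimes>\<^sub>M borel) (\<lambda>z. (f z, g z)))"
    by (rule prob_space.prob_space_distr[OF assms(1)]) simp
  show "distr (distr P (borel \<Otimes>\<^sub>M borel) (\<lambda>z. (f z, g z))) borel fst = distr P borel f"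
    by (subst distr_distr) (simp_all add: comp_def)
  show "distr (distr P (borel \<Otimes>\<^sub>M borel) (\<lambda>z. (f z, g z))) borel snd = distr P borel g"
    by (subst distr_distr) (simp_all add: comp_def)
qed simp

lemma nn_integral_coupling_ge_lipschitz:
  fixes \<phi> :: "real \<Rightarrow> real"
  assumes \<pi>: "\<pi> \<in> couplings \<mu> \<nu>" and [measurable]: "\<phi> \<in> borel_measurable borel"
    and lip: "\<And>x y. \<phi> x - \<phi> y \<le> \<bar>x - y\<bar>"
    and int_\<mu>: "integrable \<mu> \<phi>" and int_\<nu>: "integrable \<nu> \<phi>"
  shows "ennreal (integral\<^sup>L \<mu> \<phi> - integral\<^sup>L \<nu> \<phi>) \<le> (\<integral>\<^sup>+ z. ennreal \<bar>fst z - snd z\<bar> \<partial>\<pi>)"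
proof -
  have sets_\<pi>: "sets \<pi> = sets (borel \<Otimes>\<^sub>M borel)"
    and \<mu>: "distr \<pi> borel fst = \<mu>" and \<nu>: "distr \<pi> borel snd = \<nu>"
    using \<pi> by (auto simp: couplings_def)
  have [measurable]: "fst \<in> borel_measurable \<pi>" "snd \<in> borel_measurable \<pi>"
    and [measurable]: "(\<lambda>z. \<bar>fst z - snd z\<bar>) \<in> borel_measurable \<pi>"
    by (simp_all add: measurable_cong_sets[OF sets_\<pi> refl])
  have int_fst: "integrable \<pi> (\<lambda>z. \<phi> (fst z))"
    using int_\<mu> integrable_distr_eq[of fst \<pi> borel \<phi>] \<mu> by simp
  have int_snd: "integrable \<pi> (\<lambda>z. \<phi> (snd z))"
    using int_\<nu> integrable_distr_eq[of snd \<pi> borel \<phi>] \<nu> by simp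
  have diff: "integral\<^sup>L \<mu> \<phi> - integral\<^sup>L \<nu> \<phi> = (\<integral>z. \<phi> (fst z) - \<phi> (snd z) \<partial>\<pi>)"
    using integral_distr[of fst \<pi> borel \<phi>] integral_distr[of snd \<pi> borel \<phi>] \<mu> \<nu>
    by (simp add: Bochner_Integration.integral_diff[OF int_fst int_snd])
  show ?thesis
  proof (cases "(\<integral>\<^sup>+ z. ennreal \<bar>fst z - snd z\<bar> \<partial>\<pi>) = \<infinity>")
    case False
    then have int_cost: "integrable \<pi> (\<lambda>z. \<bar>fst z - snd z\<bar>)"
      by (intro integrableI_bounded) (auto simp: less_top)
    have "integral\<^sup>L \<mu> \<phi> - integral\<^sup>L \<nu> \<phi> \<le> (\<integral>z. \<bar>fst z - snd z\<bar> \<partial>\<pi>)"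
      unfolding diff
      by (intro integral_mono Bochner_Integration.integrable_diff int_fst int_snd int_cost lip)
    then show ?thesis
      by (simp add: nn_integral_eq_integral[OF int_cost] ennreal_leI)
  qed simp
qed

lemma wasserstein1_eqI:
  assumes "\<pi>\<^sub>0 \<in> couplings \<mu> \<nu>" "(\<integral>\<^sup>+ z. ennreal \<bar>fst z - snd z\<bar> \<partial>\<pi>\<^sub>0) = ennreal w" "w \<ge> 0"
    and "\<And>\<pi>. \<pi> \<in> couplings \<mu> \<nu> \<Longrightarrow> ennreal w \<le> (\<integral>\<^sup>+ z. ennreal \<bar>fst z - snd z\<bar> \<partial>\<pi>)"
  shows "wasserstein1 \<mu> \<nu> = w"
proof -
  have "(INF \<pi> \<in> couplings \<mu> \<nu>. \<integral>\<^sup>+ z. ennreal \<bar>fst z - snd z\<bar> \<partial>\<pi>) = ennreal w"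
    using INF_lower[OF assms(1), of "\<lambda>\<pi>. \<integral>\<^sup>+ z. ennreal \<bar>fst z - snd z\<bar> \<partial>\<pi>"] assms(2,4)
    by (intro antisym INF_greatest) auto
  then show ?thesis
    using assms(3) by (simp add: wasserstein1_def)
qed

section \<open>The standard normal distribution\<close>

definition std_normal :: "real measure" where
  "std_normal = gaussian 0 1"

lemma std_normal_eq_density: "std_normal = density lborel std_normal_density"
  by (simp add: std_normal_def gaussian_def)

interpretation std_normal: prob_space std_normal
  unfolding std_normal_eq_density by (rule prob_space_normal_density) simp

lemma sets_std_normal [measurable_cong, simp]: "sets std_normal = sets borel"
  by (simp add: std_normal_eq_density)

lemma space_std_normal [simp]: "space std_normal = UNIV"
  by (simp add: std_normal_eq_density)

lemma distr_std_normal_affine: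
  assumes "s \<noteq> 0"
  shows "distr std_normal borel (\<lambda>z. m + s * z) = gaussian m \<bar>s\<bar>"
proof -
  have "distributed std_normal lborel (\<lambda>z. z) (normal_density 0 1)"
    by (simp add: distributed_def std_normal_eq_density distr_id2)
  from std_normal.normal_density_affine[OF this, of s m]
  have "distributed std_normal lborel (\<lambda>z. m + s * z) (normal_density m \<bar>s\<bar>)"
    using assms by simp
  then have "distr std_normal lborel (\<lambda>z. m + s * z) = gaussian m \<bar>s\<bar>"
    by (simp add: gaussian_def distributed_distr_eq_density)
  moreover have "distr std_normal borel (\<lambda>z. m + s * z) = distr std_normal lborel (\<lambda>z. m + s * z)"
    by (rule distr_cong) auto
  ultimately show ?thesis by simp
qed

lemma integral_std_normal_uminus:
  fixes f :: "real \<Rightarrow> real"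
  assumes "f \<in> borel_measurable borel"
  shows "(\<integral>z. f (- z) \<partial>std_normal) = integral\<^sup>L std_normal f"
proof -
  have "distr std_normal borel uminus = std_normal"
    using distr_std_normal_affine[of "-1" 0] by (simp add: std_normal_def)
  moreover have "integral\<^sup>L (distr std_normal borel uminus) f = (\<integral>z. f (- z) \<partial>std_normal)"
    by (rule integral_distr) (use assms in auto)
  ultimately show ?thesis by simp
qed

lemma integrable_gaussian_iff:
  fixes f :: "real \<Rightarrow> real"
  assumes "s > 0" "f \<in> borel_measurable borel"
  shows "integrable (gaussian m s) f \<longleftrightarrow> integrable std_normal (\<lambda>z. f (m + s * z))"
  using integrable_distr_eq[of "\<lambda>z. m + s * z" std_normal borel f] distr_std_normal_affine[of s m]
    assms by simp

lemma integral_gaussian: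
  fixes f :: "real \<Rightarrow> real"
  assumes "s > 0" "f \<in> borel_measurable borel"
  shows "integral\<^sup>L (gaussian m s) f = (\<integral>z. f (m + s * z) \<partial>std_normal)"
  using integral_distr[of "\<lambda>z. m + s * z" std_normal borel f] distr_std_normal_affine[of s m]
    assms by simp

lemma integrable_std_normal_iff:
  fixes f :: "real \<Rightarrow> real"
  assumes "f \<in> borel_measurable borel"
  shows "integrable std_normal f \<longleftrightarrow> integrable lborel (\<lambda>x. std_normal_density x * f x)"
  unfolding std_normal_eq_density using assms by (subst integrable_real_density) auto

lemma integral_std_normal:
  fixes f :: "real \<Rightarrow> real"
  assumes "f \<in> borel_measurable borel"
  shows "integral\<^sup>L std_normal f = (\<integral>x. std_normal_density x * f x \<partial>lborel)"
  unfolding std_normal_eq_density using assms by (subst integral_real_density) auto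

lemma integrable_std_normal_power: "integrable std_normal (\<lambda>z. z ^ k)"
  using integrable_std_normal_moment[of k] by (subst integrable_std_normal_iff) auto

lemma integrable_std_normal_abs: "integrable std_normal (\<lambda>z. \<bar>z\<bar>)"
  using integrable_std_normal_moment_abs[of 1] by (subst integrable_std_normal_iff) auto

lemma std_normal_mean: "(\<integral>z. z \<partial>std_normal) = 0"
  using integral_std_normal_moment_odd[of 0] by (subst integral_std_normal) auto

lemma std_normal_second_moment: "(\<integral>z. z\<^sup>2 \<partial>std_normal) = 1"
  using integral_std_normal_moment_even[of 1] by (subst integral_std_normal) auto

lemma std_normal_mean_abs: "(\<integral>z. \<bar>z\<bar> \<partial>std_normal) = sqrt (2 / pi)"
  using integral_std_normal_moment_abs_odd[of 0] by (subst integral_std_normal) auto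

lemma integrable_std_normal_linear_growth:
  fixes f :: "real \<Rightarrow> real"
  assumes "f \<in> borel_measurable borel" and "\<And>z. \<bar>f z\<bar> \<le> A + B * \<bar>z\<bar>"
  shows "integrable std_normal f"
proof (rule Bochner_Integration.integrable_bound)
  show "integrable std_normal (\<lambda>z. A + B * \<bar>z\<bar>)"
    using integrable_std_normal_abs by simp
  show "AE z in std_normal. norm (f z) \<le> norm (A + B * \<bar>z\<bar>)"
    using assms(2) by (auto intro: order_trans[OF _ abs_ge_self])
qed (use assms(1) in simp)

lemma std_normal_density_le_1: "std_normal_density x \<le> 1"
proof -
  have "1 / sqrt (2 * pi) \<le> 1"
    using pi_gt3 by (simp add: divide_le_eq)
  moreover have "exp (- x\<^sup>2 / 2) \<le> 1"
    by simp
  ultimately show ?thesis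
    unfolding std_normal_density_def by (intro mult_le_one) auto
qed

lemma measure_std_normal_interval_le:
  assumes "a \<le> b"
  shows "measure std_normal {a..b} \<le> b - a"
proof -
  have "emeasure std_normal {a..b}
      = (\<integral>\<^sup>+ x. ennreal (std_normal_density x) * indicator {a..b} x \<partial>lborel)"
    unfolding std_normal_eq_density by (subst emeasure_density) auto
  also have "\<dots> \<le> (\<integral>\<^sup>+ x. indicator {a..b} x \<partial>lborel)"
    by (intro nn_integral_mono) (auto simp: std_normal_density_le_1 split: split_indicator)
  also have "\<dots> = ennreal (b - a)"
    using assms by simp
  finally show ?thesis
    using assms by (simp add: std_normal.emeasure_eq_measure ennreal_le_iff)
qed

section \<open>The folded normal mean\<close>

definition folded_normal_mean :: "real \<Rightarrow> real \<Rightarrow> real" where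
  "folded_normal_mean m s = (\<integral>z. \<bar>m + s * z\<bar> \<partial>std_normal)"

lemma integrable_abs_affine_std_normal: "integrable std_normal (\<lambda>z. \<bar>m + s * z\<bar>)"
proof (rule integrable_std_normal_linear_growth)
  show "\<bar>\<bar>m + s * z\<bar>\<bar> \<le> \<bar>m\<bar> + \<bar>s\<bar> * \<bar>z\<bar>" for z
    using abs_triangle_ineq[of m "s * z"] by (simp add: abs_mult)
qed simp

lemma folded_normal_mean_nonneg: "folded_normal_mean m s \<ge> 0"
  by (simp add: folded_normal_mean_def)

lemma kantorovich_potential_comonotone_affine:
  fixes m\<^sub>1 m\<^sub>2 s\<^sub>1 s\<^sub>2 :: real
  assumes "s\<^sub>1 \<ge> 0" "s\<^sub>2 \<ge> 0"
  obtains \<phi> :: "real \<Rightarrow> real" where "\<phi> \<in> borel_measurable borel" "\<And>x y. \<phi> x - \<phi> y \<le> \<bar>x - y\<bar>"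
    "\<And>z. \<phi> (m\<^sub>1 + s\<^sub>1 * z) - \<phi> (m\<^sub>2 + s\<^sub>2 * z) = \<bar>m\<^sub>1 - m\<^sub>2 + (s\<^sub>1 - s\<^sub>2) * z\<bar>"
proof (cases "s\<^sub>1 = s\<^sub>2")
  case True
  define c where "c = sgn (m\<^sub>1 - m\<^sub>2)"
  show ?thesis
  proof (rule that[of "\<lambda>x. c * x"])
    show "c * x - c * y \<le> \<bar>x - y\<bar>" for x y
      by (auto simp: c_def sgn_if algebra_simps)
    show "c * (m\<^sub>1 + s\<^sub>1 * z) - c * (m\<^sub>2 + s\<^sub>2 * z) = \<bar>m\<^sub>1 - m\<^sub>2 + (s\<^sub>1 - s\<^sub>2) * z\<bar>" for z
      using True by (simp add: c_def sgn_if algebra_simps)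
  qed simp
next
  case False
  define z\<^sub>0 where "z\<^sub>0 = - (m\<^sub>1 - m\<^sub>2) / (s\<^sub>1 - s\<^sub>2)"
  define x\<^sub>0 where "x\<^sub>0 = m\<^sub>1 + s\<^sub>1 * z\<^sub>0"
  have x\<^sub>0_alt: "x\<^sub>0 = m\<^sub>2 + s\<^sub>2 * z\<^sub>0"
    using False by (simp add: x\<^sub>0_def z\<^sub>0_def field_simps)
  define c where "c = sgn (s\<^sub>1 - s\<^sub>2)"
  show ?thesis
  proof (rule that[of "\<lambda>x. c * \<bar>x - x\<^sub>0\<bar>"])
    show "c * \<bar>x - x\<^sub>0\<bar> - c * \<bar>y - x\<^sub>0\<bar> \<le> \<bar>x - y\<bar>" for x y
      by (auto simp: c_def sgn_if)
    fix z
    have shift: "m\<^sub>1 + s\<^sub>1 * z - x\<^sub>0 = s\<^sub>1 * (z - z\<^sub>0)" "m\<^sub>2 + s\<^sub>2 * z - x\<^sub>0 = s\<^sub>2 * (z - z\<^sub>0)"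
      unfolding x\<^sub>0_def by (simp add: algebra_simps) (simp add: x\<^sub>0_alt[unfolded x\<^sub>0_def] algebra_simps)
    have "c * \<bar>m\<^sub>1 + s\<^sub>1 * z - x\<^sub>0\<bar> - c * \<bar>m\<^sub>2 + s\<^sub>2 * z - x\<^sub>0\<bar> = c * (s\<^sub>1 - s\<^sub>2) * \<bar>z - z\<^sub>0\<bar>"
      unfolding shift abs_mult using assms by (simp add: algebra_simps)
    also have "\<dots> = \<bar>(s\<^sub>1 - s\<^sub>2) * (z - z\<^sub>0)\<bar>"
      by (simp add: c_def abs_mult sgn_if)
    also have "(s\<^sub>1 - s\<^sub>2) * (z - z\<^sub>0) = m\<^sub>1 - m\<^sub>2 + (s\<^sub>1 - s\<^sub>2) * z"
      using False by (simp add: z\<^sub>0_def field_simps)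
    finally show "c * \<bar>m\<^sub>1 + s\<^sub>1 * z - x\<^sub>0\<bar> - c * \<bar>m\<^sub>2 + s\<^sub>2 * z - x\<^sub>0\<bar> = \<bar>m\<^sub>1 - m\<^sub>2 + (s\<^sub>1 - s\<^sub>2) * z\<bar>" .
  qed simp
qed

lemma integrable_gaussian_lipschitz:
  fixes \<phi> :: "real \<Rightarrow> real"
  assumes "s > 0" "\<phi> \<in> borel_measurable borel" "\<And>x y. \<phi> x - \<phi> y \<le> \<bar>x - y\<bar>"
  shows "integrable (gaussian m s) \<phi>"
  unfolding integrable_gaussian_iff[OF assms(1,2)]
proof (rule integrable_std_normal_linear_growth)
  show "\<bar>\<phi> (m + s * z)\<bar> \<le> (\<bar>\<phi> 0\<bar> + \<bar>m\<bar>) + s * \<bar>z\<bar>" for z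
    using assms(3)[of "m + s * z" 0] assms(3)[of 0 "m + s * z"] abs_triangle_ineq[of m "s * z"] assms(1)
    by (simp add: abs_mult)
qed (use assms(2) in simp)

lemma wasserstein1_gaussian:
  assumes "s\<^sub>1 > 0" "s\<^sub>2 > 0"
  shows "wasserstein1 (gaussian m\<^sub>1 s\<^sub>1) (gaussian m\<^sub>2 s\<^sub>2) = folded_normal_mean (m\<^sub>1 - m\<^sub>2) (s\<^sub>1 - s\<^sub>2)"
proof (rule wasserstein1_eqI)
  let ?\<pi>\<^sub>0 = "distr std_normal (borel \<Otimes>\<^sub>M borel) (\<lambda>z. (m\<^sub>1 + s\<^sub>1 * z, m\<^sub>2 + s\<^sub>2 * z))"
  show "?\<pi>\<^sub>0 \<in> couplings (gaussian m\<^sub>1 s\<^sub>1) (gaussian m\<^sub>2 s\<^sub>2)"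
    using couplings_distr_pair[of std_normal "\<lambda>z. m\<^sub>1 + s\<^sub>1 * z" "\<lambda>z. m\<^sub>2 + s\<^sub>2 * z"] assms
    by (simp add: std_normal.prob_space_axioms distr_std_normal_affine)
  have "(\<integral>\<^sup>+ z. ennreal \<bar>fst z - snd z\<bar> \<partial>?\<pi>\<^sub>0)
      = (\<integral>\<^sup>+ z. ennreal \<bar>(m\<^sub>1 - m\<^sub>2) + (s\<^sub>1 - s\<^sub>2) * z\<bar> \<partial>std_normal)"
    by (subst nn_integral_distr) (simp_all add: algebra_simps)
  also have "\<dots> = ennreal (folded_normal_mean (m\<^sub>1 - m\<^sub>2) (s\<^sub>1 - s\<^sub>2))"
    unfolding folded_normal_mean_def
    by (rule nn_integral_eq_integral[OF integrable_abs_affine_std_normal]) simp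
  finally show "(\<integral>\<^sup>+ z. ennreal \<bar>fst z - snd z\<bar> \<partial>?\<pi>\<^sub>0) = ennreal (folded_normal_mean (m\<^sub>1 - m\<^sub>2) (s\<^sub>1 - s\<^sub>2))" .
  show "folded_normal_mean (m\<^sub>1 - m\<^sub>2) (s\<^sub>1 - s\<^sub>2) \<ge> 0"
    by (rule folded_normal_mean_nonneg)
  fix \<pi> assume \<pi>: "\<pi> \<in> couplings (gaussian m\<^sub>1 s\<^sub>1) (gaussian m\<^sub>2 s\<^sub>2)"
  obtain \<phi> where [measurable]: "\<phi> \<in> borel_measurable borel" and lip: "\<And>x y. \<phi> x - \<phi> y \<le> \<bar>x - y\<bar>"
    and separating: "\<And>z. \<phi> (m\<^sub>1 + s\<^sub>1 * z) - \<phi> (m\<^sub>2 + s\<^sub>2 * z) = \<bar>m\<^sub>1 - m\<^sub>2 + (s\<^sub>1 - s\<^sub>2) * z\<bar>"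
    using kantorovich_potential_comonotone_affine[of s\<^sub>1 s\<^sub>2 m\<^sub>1 m\<^sub>2] assms by auto
  have int: "integrable (gaussian m s) \<phi>" "integrable std_normal (\<lambda>z. \<phi> (m + s * z))" if "s > 0" for m s
    using integrable_gaussian_lipschitz[OF that _ lip] integrable_gaussian_iff[OF that] by simp_all
  have "integral\<^sup>L (gaussian m\<^sub>1 s\<^sub>1) \<phi> - integral\<^sup>L (gaussian m\<^sub>2 s\<^sub>2) \<phi>
      = (\<integral>z. \<phi> (m\<^sub>1 + s\<^sub>1 * z) - \<phi> (m\<^sub>2 + s\<^sub>2 * z) \<partial>std_normal)"
    using assms by (simp add: integral_gaussian Bochner_Integration.integral_diff int)
  also have "\<dots> = folded_normal_mean (m\<^sub>1 - m\<^sub>2) (s\<^sub>1 - s\<^sub>2)"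
    by (simp add: separating folded_normal_mean_def)
  finally show "ennreal (folded_normal_mean (m\<^sub>1 - m\<^sub>2) (s\<^sub>1 - s\<^sub>2))
      \<le> (\<integral>\<^sup>+ z. ennreal \<bar>fst z - snd z\<bar> \<partial>\<pi>)"
    using nn_integral_coupling_ge_lipschitz[OF \<pi> _ lip] assms int by simp
qed

lemma gaussW_eq_folded_normal_mean: "gaussW m s = folded_normal_mean m s"
  using wasserstein1_gaussian[of "1 + \<bar>s\<bar> + s" "1 + \<bar>s\<bar>" m 0] by (simp add: gaussW_def)

lemma folded_normal_mean_scale_0: "folded_normal_mean m 0 = \<bar>m\<bar>"
  using std_normal.prob_space by (simp add: folded_normal_mean_def)

lemma folded_normal_mean_loc_0: "folded_normal_mean 0 s = sqrt (2 / pi) * \<bar>s\<bar>"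
  by (simp add: folded_normal_mean_def abs_mult std_normal_mean_abs)

lemma folded_normal_mean_uminus: "folded_normal_mean (- m) (- s) = folded_normal_mean m s"
  unfolding folded_normal_mean_def by (metis abs_minus_cancel minus_add_distrib mult_minus_left)

lemma folded_normal_mean_reflect: "folded_normal_mean m (- s) = folded_normal_mean m s"
  unfolding folded_normal_mean_def
  by (subst integral_std_normal_uminus[symmetric]) simp_all

lemma folded_normal_mean_add:
  "folded_normal_mean (m + m') (s + s') \<le> folded_normal_mean m s + folded_normal_mean m' s'"
  unfolding folded_normal_mean_def
proof (subst Bochner_Integration.integral_add[symmetric])
  show "(\<integral>z. \<bar>m + m' + (s + s') * z\<bar> \<partial>std_normal)
      \<le> (\<integral>z. \<bar>m + s * z\<bar> + \<bar>m' + s' * z\<bar> \<partial>std_normal)"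
    by (intro integral_mono Bochner_Integration.integrable_add integrable_abs_affine_std_normal)
       (simp add: algebra_simps abs_triangle_ineq[THEN order_trans])
qed (fact integrable_abs_affine_std_normal)+

lemma folded_normal_mean_lipschitz:
  "\<bar>folded_normal_mean m s - folded_normal_mean m' s'\<bar> \<le> \<bar>m - m'\<bar> + sqrt (2 / pi) * \<bar>s - s'\<bar>"
proof -
  have bound: "folded_normal_mean (m - m') (s - s') \<le> \<bar>m - m'\<bar> + sqrt (2 / pi) * \<bar>s - s'\<bar>"
    using folded_normal_mean_add[of "m - m'" 0 0 "s - s'"]
    by (simp add: folded_normal_mean_scale_0 folded_normal_mean_loc_0)
  have "folded_normal_mean m s \<le> folded_normal_mean (m - m') (s - s') + folded_normal_mean m' s'"
    using folded_normal_mean_add[of "m - m'" m' "s - s'" s'] by simp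
  moreover have "folded_normal_mean m' s' \<le> folded_normal_mean (m - m') (s - s') + folded_normal_mean m s"
    using folded_normal_mean_add[of "m' - m" m "s' - s" s] folded_normal_mean_uminus[of "m - m'" "s - s'"]
    by simp
  ultimately show ?thesis
    using bound by linarith
qed

lemma tendsto_folded_normal_mean [tendsto_intros]:
  assumes "(f \<longlongrightarrow> m) F" "(g \<longlongrightarrow> s) F"
  shows "((\<lambda>x. folded_normal_mean (f x) (g x)) \<longlongrightarrow> folded_normal_mean m s) F"
proof (rule LIM_zero_cancel, rule Lim_null_comparison)
  show "\<forall>\<^sub>F x in F. norm (folded_normal_mean (f x) (g x) - folded_normal_mean m s)
      \<le> \<bar>f x - m\<bar> + sqrt (2 / pi) * \<bar>g x - s\<bar>"
    by (simp add: folded_normal_mean_lipschitz)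
  have "((\<lambda>x. \<bar>f x - m\<bar> + sqrt (2 / pi) * \<bar>g x - s\<bar>)
      \<longlongrightarrow> \<bar>m - m\<bar> + sqrt (2 / pi) * \<bar>s - s\<bar>) F"
    by (intro tendsto_intros assms)
  then show "((\<lambda>x. \<bar>f x - m\<bar> + sqrt (2 / pi) * \<bar>g x - s\<bar>) \<longlongrightarrow> 0) F"
    by simp
qed

section \<open>Asymptotics of the folded normal mean\<close>

lemma abs_add_sub_linear_bounds:
  fixes m x :: real
  assumes "m \<noteq> 0"
  shows "0 \<le> \<bar>m + x\<bar> - \<bar>m\<bar> - sgn m * x" and "\<bar>m + x\<bar> - \<bar>m\<bar> - sgn m * x \<le> x\<^sup>2 / (2 * \<bar>m\<bar>)"
proof -
  show "0 \<le> \<bar>m + x\<bar> - \<bar>m\<bar> - sgn m * x"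
    by (auto simp: sgn_if abs_if)
  have "0 \<le> (\<bar>x\<bar> - 2 * \<bar>m\<bar>)\<^sup>2"
    by simp
  then show "\<bar>m + x\<bar> - \<bar>m\<bar> - sgn m * x \<le> x\<^sup>2 / (2 * \<bar>m\<bar>)"
    using assms by (auto simp: field_simps sgn_if abs_if power2_eq_square split: if_splits)
qed

lemma folded_normal_mean_large_loc:
  assumes "m \<noteq> 0"
  shows "\<bar>folded_normal_mean m s - \<bar>m\<bar>\<bar> \<le> s\<^sup>2 / (2 * \<bar>m\<bar>)"
proof -
  define g where "g z = (\<bar>m + s * z\<bar> - \<bar>m\<bar>) - sgn m * (s * z)" for z
  have int_abs: "integrable std_normal (\<lambda>z. \<bar>m + s * z\<bar> - \<bar>m\<bar>)"
    by (intro Bochner_Integration.integrable_diff integrable_abs_affine_std_normal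
        std_normal.integrable_const)
  have int_lin: "integrable std_normal (\<lambda>z. sgn m * (s * z))"
    using integrable_std_normal_power[of 1] by simp
  have int_g: "integrable std_normal g"
    unfolding g_def by (rule Bochner_Integration.integrable_diff[OF int_abs int_lin])
  have "integral\<^sup>L std_normal g
      = (\<integral>z. \<bar>m + s * z\<bar> - \<bar>m\<bar> \<partial>std_normal) - (\<integral>z. sgn m * (s * z) \<partial>std_normal)"
    unfolding g_def by (rule Bochner_Integration.integral_diff[OF int_abs int_lin])
  also have "\<dots> = folded_normal_mean m s - \<bar>m\<bar>"
    using std_normal.prob_space
    by (simp add: folded_normal_mean_def integrable_abs_affine_std_normal std_normal_mean)
  finally have "integral\<^sup>L std_normal g = folded_normal_mean m s - \<bar>m\<bar>" .
  moreover have "0 \<le> integral\<^sup>L std_normal g"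
    unfolding g_def by (intro integral_nonneg_AE AE_I2 abs_add_sub_linear_bounds(1)[OF assms])
  moreover have "integral\<^sup>L std_normal g \<le> s\<^sup>2 / (2 * \<bar>m\<bar>)"
  proof -
    have "integral\<^sup>L std_normal g \<le> (\<integral>z. s\<^sup>2 / (2 * \<bar>m\<bar>) * z\<^sup>2 \<partial>std_normal)"
    proof (rule integral_mono[OF int_g])
      show "integrable std_normal (\<lambda>z. s\<^sup>2 / (2 * \<bar>m\<bar>) * z\<^sup>2)"
        by (intro integrable_mult_right integrable_std_normal_power)
      show "g z \<le> s\<^sup>2 / (2 * \<bar>m\<bar>) * z\<^sup>2" for z
        using abs_add_sub_linear_bounds(2)[OF assms, of "s * z"] by (simp add: g_def power_mult_distrib)
    qed
    also have "\<dots> = s\<^sup>2 / (2 * \<bar>m\<bar>)"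
      by (simp add: std_normal_second_moment)
    finally show ?thesis .
  qed
  ultimately show ?thesis
    by linarith
qed

lemma abs_add_plus_abs_diff: "\<bar>m + a\<bar> + \<bar>m - a\<bar> = 2 * max \<bar>m\<bar> \<bar>a\<bar>"
  for m a :: real
  by (auto simp: abs_if max_def)

lemma folded_normal_mean_eq_max: "folded_normal_mean m s = (\<integral>z. max \<bar>m\<bar> \<bar>s * z\<bar> \<partial>std_normal)"
proof -
  have "2 * folded_normal_mean m s = folded_normal_mean m s + folded_normal_mean m (- s)"
    by (simp add: folded_normal_mean_reflect)
  also have "\<dots> = (\<integral>z. \<bar>m + s * z\<bar> + \<bar>m - s * z\<bar> \<partial>std_normal)"
    using integrable_abs_affine_std_normal[of m "- s"]
    by (simp add: folded_normal_mean_def integrable_abs_affine_std_normal)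
  also have "\<dots> = 2 * (\<integral>z. max \<bar>m\<bar> \<bar>s * z\<bar> \<partial>std_normal)"
    by (simp add: abs_add_plus_abs_diff)
  finally show ?thesis
    by simp
qed

lemma folded_normal_mean_large_scale:
  assumes "s \<noteq> 0"
  shows "\<bar>folded_normal_mean m s - sqrt (2 / pi) * \<bar>s\<bar>\<bar> \<le> 2 * m\<^sup>2 / \<bar>s\<bar>"
proof -
  define r where "r = \<bar>m\<bar> / \<bar>s\<bar>"
  define g where "g z = max 0 (\<bar>m\<bar> - \<bar>s * z\<bar>)" for z
  have int_g: "integrable std_normal g"
    unfolding g_def
    by (rule integrable_std_normal_linear_growth[where A="\<bar>m\<bar>" and B="\<bar>s\<bar>"])
       (auto simp: abs_mult)
  have "folded_normal_mean m s - sqrt (2 / pi) * \<bar>s\<bar> = (\<integral>z. max \<bar>m\<bar> \<bar>s * z\<bar> - \<bar>s * z\<bar> \<partial>std_normal)"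
    using folded_normal_mean_loc_0[of s] integrable_abs_affine_std_normal[of 0 s]
    by (simp add: folded_normal_mean_eq_max folded_normal_mean_def)
  also have "\<dots> = integral\<^sup>L std_normal g"
    by (rule Bochner_Integration.integral_cong) (auto simp: g_def max_def)
  finally have eq: "folded_normal_mean m s - sqrt (2 / pi) * \<bar>s\<bar> = integral\<^sup>L std_normal g" .
  have "integral\<^sup>L std_normal g \<le> (\<integral>z. \<bar>m\<bar> * indicator {-r..r} z \<partial>std_normal)"
  proof (rule integral_mono[OF int_g])
    show "integrable std_normal (\<lambda>z. \<bar>m\<bar> * indicator {-r..r} z)"
      by (intro integrable_mult_right integrable_real_indicator)
         (auto simp: std_normal.emeasure_eq_measure)
    show "g z \<le> \<bar>m\<bar> * indicator {-r..r} z" for z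
    proof (cases "\<bar>z\<bar> \<le> r")
      case False
      then have "\<bar>m\<bar> / \<bar>s\<bar> < \<bar>z\<bar>"
        by (simp add: r_def)
      then have "\<bar>m\<bar> < \<bar>s * z\<bar>"
        using assms by (simp add: abs_mult pos_divide_less_eq mult.commute)
      then show ?thesis by (simp add: g_def indicator_def abs_le_iff)
    qed (auto simp: g_def indicator_def abs_le_iff)
  qed
  also have "\<dots> = \<bar>m\<bar> * measure std_normal {-r..r}"
    by simp
  also have "\<dots> \<le> \<bar>m\<bar> * (2 * r)"
    using measure_std_normal_interval_le[of "-r" r] by (intro mult_left_mono) (auto simp: r_def)
  also have "\<dots> = 2 * m\<^sup>2 / \<bar>s\<bar>"
    by (simp add: r_def power2_eq_square)
  finally show ?thesis
    using eq integral_nonneg_AE[of g std_normal] by (simp add: g_def)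
qed

lemma tendsto_0_at_infinity_if_bounded_by_inverse:
  fixes f :: "real \<Rightarrow> real"
  assumes "\<And>x. x \<noteq> 0 \<Longrightarrow> \<bar>f x\<bar> \<le> c / \<bar>x\<bar>"
  shows "(f \<longlongrightarrow> 0) at_infinity"
proof (rule Lim_null_comparison)
  show "\<forall>\<^sub>F x in at_infinity. norm (f x) \<le> c * norm (inverse x)"
  proof -
    have "\<forall>\<^sub>F x in at_infinity. x \<noteq> (0::real)"
      unfolding eventually_at_infinity by (rule exI[of _ 1]) auto
    then show ?thesis
      by eventually_elim (use assms in \<open>simp add: divide_inverse abs_inverse\<close>)
  qed
  show "((\<lambda>x::real. c * norm (inverse x)) \<longlongrightarrow> 0) at_infinity"
    by (intro tendsto_mult_right_zero tendsto_norm_zero tendsto_inverse_0)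
qed

lemma folded_normal_mean_minus_abs_loc_tendsto_0:
  "((\<lambda>m. folded_normal_mean m s - \<bar>m\<bar>) \<longlongrightarrow> 0) at_infinity"
  using folded_normal_mean_large_loc
  by (intro tendsto_0_at_infinity_if_bounded_by_inverse[where c = "s\<^sup>2 / 2"]) simp

lemma folded_normal_mean_minus_abs_scale_tendsto_0:
  "((\<lambda>s. folded_normal_mean m s - sqrt (2 / pi) * \<bar>s\<bar>) \<longlongrightarrow> 0) at_infinity"
  using folded_normal_mean_large_scale
  by (intro tendsto_0_at_infinity_if_bounded_by_inverse[where c = "2 * m\<^sup>2"]) simp

theorem proposition1:
  shows "(\<forall>mu1 mu2 s1 s2 :: real. s1 > 0 \<and> s2 > 0 \<longrightarrow>
            wasserstein1 (gaussian mu1 s1) (gaussian mu2 s2) = gaussW (mu1 - mu2) (s1 - s2))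
       \<and> (\<forall>my. ((\<lambda>sy. gaussW my sy) \<longlongrightarrow> \<bar>my\<bar>) (at 0))
       \<and> (\<forall>sy. ((\<lambda>my. gaussW my sy - \<bar>my\<bar>) \<longlongrightarrow> 0) at_top
              \<and> ((\<lambda>my. gaussW my sy - \<bar>my\<bar>) \<longlongrightarrow> 0) at_bot)
       \<and> (\<forall>my. ((\<lambda>sy. gaussW my sy - sqrt (2 / pi) * \<bar>sy\<bar>) \<longlongrightarrow> 0) at_top
              \<and> ((\<lambda>sy. gaussW my sy - sqrt (2 / pi) * \<bar>sy\<bar>) \<longlongrightarrow> 0) at_bot)
       \<and> (\<forall>sy. sy \<noteq> 0 \<longrightarrow> ((\<lambda>my. gaussW my sy) \<longlongrightarrow> sqrt (2 / pi) * \<bar>sy\<bar>) (at 0))"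
  unfolding gaussW_eq_folded_normal_mean
proof (intro conjI allI impI)
  fix mu1 mu2 s1 s2 :: real
  assume "s1 > 0 \<and> s2 > 0"
  then show "wasserstein1 (gaussian mu1 s1) (gaussian mu2 s2) = folded_normal_mean (mu1 - mu2) (s1 - s2)"
    by (simp add: wasserstein1_gaussian)
next
  fix my :: real
  show "((\<lambda>sy. folded_normal_mean my sy) \<longlongrightarrow> \<bar>my\<bar>) (at 0)"
    by (rule tendsto_eq_rhs[OF tendsto_folded_normal_mean[OF tendsto_const tendsto_ident_at]])
       (simp add: folded_normal_mean_scale_0)
next
  fix sy :: real
  show "((\<lambda>my. folded_normal_mean my sy) \<longlongrightarrow> sqrt (2 / pi) * \<bar>sy\<bar>) (at 0)"
    by (rule tendsto_eq_rhs[OF tendsto_folded_normal_mean[OF tendsto_ident_at tendsto_const]])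
       (simp add: folded_normal_mean_loc_0)
qed (use tendsto_mono[OF at_top_le_at_infinity] tendsto_mono[OF at_bot_le_at_infinity]
       folded_normal_mean_minus_abs_loc_tendsto_0 folded_normal_mean_minus_abs_scale_tendsto_0 in blast)+

end
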